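(* Let $X$ be a $0$-dimensional, $\mathbb N$-compact space of non-measurable cardinality. Then the evaluation map $\mathcal E:C_p(X,\mathbb Z)\to\widehat{\widehat{C_p(X,\mathbb Z)}}$ is a topological isomorphism of $C_p(X,\mathbb Z)$ onto its image.
   Context: Spaces are Tikhonov; $0$-dimensional means having a base of clopen sets; $\mathbb N$-compact means homeomorphic to a closed subspace of a product of copies of the discrete space $\mathbb N$. $C_p(X,\mathbb Z)$ is the group of continuous functions $X\to\mathbb Z$ ($\mathbb Z$ discrete) with the topology of pointwise convergence. For a topological abelian group $G$, $\widehat G$ is the group of continuous homomorphisms into $\mathbb T=\mathbb R/\mathbb Z$ with the compact-open topology, and $\mathcal E(g)(\chi)=\chi(g)$. *)

theory Defs
  imports "HOL-Analysis.Analysis"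
begin

definition tikhonov_space :: "'a topology \<Rightarrow> bool" where
  "tikhonov_space X \<longleftrightarrow> completely_regular_space X \<and> t1_space X"

definition zero_dimensional :: "'a topology \<Rightarrow> bool" where
  "zero_dimensional X \<longleftrightarrow> neighbourhood_base_of (\<lambda>U. closedin X U \<and> openin X U) X"

definition nat_power :: "'i set \<Rightarrow> ('i \<Rightarrow> nat) topology" where
  "nat_power I = product_topology (\<lambda>_. discrete_topology (UNIV :: nat set)) I"

text \<open>The index set is taken inside the type of functions from the points to N; this loses
  no generality (an index set of size at most |C(X,N)| always suffices).\<close>
definition N_compact :: "'a topology \<Rightarrow> bool" where
  "N_compact X \<longleftrightarrow> (\<exists>(I :: ('a \<Rightarrow> nat) set) (f :: 'a \<Rightarrow> (('a \<Rightarrow> nat) \<Rightarrow> nat)).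
      closedin (nat_power I) (f ` topspace X) \<and>
      homeomorphic_map X (subtopology (nat_power I) (f ` topspace X)) f)"

text \<open>A set S has measurable cardinality iff there is a free (non-principal) ultrafilter
  on S closed under countable intersections (equivalently a nontrivial countably additive
  two-valued measure on all subsets of S vanishing on singletons).\<close>
definition measurable_cardinality :: "'a set \<Rightarrow> bool" where
  "measurable_cardinality S \<longleftrightarrow> (\<exists>\<F> :: 'a set set.
      \<F> \<subseteq> Pow S \<and> S \<in> \<F> \<and> {} \<notin> \<F> \<and>
      (\<forall>A B. A \<in> \<F> \<and> A \<subseteq> B \<and> B \<subseteq> S \<longrightarrow> B \<in> \<F>) \<and>
      (\<forall>A. A \<subseteq> S \<longrightarrow> A \<in> \<F> \<or> S - A \<in> \<F>) \<and>
      (\<forall>\<C>. countable \<C> \<and> \<C> \<noteq> {} \<and> \<C> \<subseteq> \<F> \<longrightarrow> \<Inter>\<C> \<in> \<F>) \<and>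
      (\<forall>x\<in>S. {x} \<notin> \<F>))"

definition Cp_carrier :: "'a topology \<Rightarrow> ('a \<Rightarrow> int) set" where
  "Cp_carrier X = {f. continuous_map X (discrete_topology (UNIV :: int set)) f \<and>
                      f \<in> extensional (topspace X)}"

definition Cp_top :: "'a topology \<Rightarrow> ('a \<Rightarrow> int) topology" where
  "Cp_top X = subtopology (product_topology (\<lambda>_. discrete_topology (UNIV :: int set)) (topspace X))
                          (Cp_carrier X)"

definition Cp_add :: "'a topology \<Rightarrow> ('a \<Rightarrow> int) \<Rightarrow> ('a \<Rightarrow> int) \<Rightarrow> ('a \<Rightarrow> int)" where
  "Cp_add X f g = restrict (\<lambda>x. f x + g x) (topspace X)"

text \<open>The circle group T = R/Z, realised (isomorphically, as a topological group) as the
  multiplicative unit circle in C.\<close>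
definition circle :: "complex set" where
  "circle = {z. cmod z = 1}"

text \<open>A topological abelian group is given by its topology G (carrier = topspace G) and its
  addition. Characters: continuous homomorphisms into the circle (extensional).\<close>
definition characters :: "'g topology \<Rightarrow> ('g \<Rightarrow> 'g \<Rightarrow> 'g) \<Rightarrow> ('g \<Rightarrow> complex) set" where
  "characters G add = {c. continuous_map G (subtopology euclidean circle) c \<and>
      (\<forall>x\<in>topspace G. \<forall>y\<in>topspace G. c (add x y) = c x * c y) \<and>
      c \<in> extensional (topspace G)}"

definition dual_top :: "'g topology \<Rightarrow> ('g \<Rightarrow> 'g \<Rightarrow> 'g) \<Rightarrow> ('g \<Rightarrow> complex) topology" where
  "dual_top G add = topology_generated_by
     {{c \<in> characters G add. c ` K \<subseteq> U} | K U. compactin G K \<and> open U}"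

definition dual_add :: "'g topology \<Rightarrow> ('g \<Rightarrow> complex) \<Rightarrow> ('g \<Rightarrow> complex) \<Rightarrow> ('g \<Rightarrow> complex)" where
  "dual_add G c d = restrict (\<lambda>x. c x * d x) (topspace G)"

definition evaluation :: "'g topology \<Rightarrow> ('g \<Rightarrow> 'g \<Rightarrow> 'g) \<Rightarrow> 'g \<Rightarrow> (('g \<Rightarrow> complex) \<Rightarrow> complex)" where
  "evaluation G add g = restrict (\<lambda>c. c g) (characters G add)"

definition top_iso_onto_image ::
  "'g topology \<Rightarrow> ('g \<Rightarrow> 'g \<Rightarrow> 'g) \<Rightarrow> 'h topology \<Rightarrow> ('h \<Rightarrow> 'h \<Rightarrow> 'h) \<Rightarrow> ('g \<Rightarrow> 'h) \<Rightarrow> bool" where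
  "top_iso_onto_image G add H addH f \<longleftrightarrow>
     f ` topspace G \<subseteq> topspace H \<and>
     (\<forall>x\<in>topspace G. \<forall>y\<in>topspace G. f (add x y) = addH (f x) (f y)) \<and>
     homeomorphic_map G (subtopology H (f ` topspace G)) f"

end

theory Submission
  imports Defs
begin

(* Every character of C_p(X,Z) factors through evaluation at finitely many points: continuity
  makes it close to 1 on all functions vanishing on some finite set F, and since that set of
  functions is a subgroup, the absence of small subgroups in the circle forces the character to
  be 1 there. In a zero-dimensional T1 space finite supports are closed under intersection, so
  every character has a least finite support. A compact set K of characters has a common finite
  support: otherwise disjoint clopen sets around infinitely many support points carry functions
  f_n with f_n -> 0 pointwise on which suitable members of K stay far from 1, contradicting
  compactness of K in the compact-open topology. Hence the evaluation map is continuous.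
  It is open onto its image because the condition g(x) = m is cut out by finitely many compact
  sets of characters: the arc t \<mapsto> (g \<mapsto> exp (i t \<theta> g(x))), 0 \<le> t \<le> 1, together with its endpoint. *)

lemma continuous_map_discrete_combine:
  assumes "continuous_map X (discrete_topology UNIV) f"
    and "continuous_map X (discrete_topology UNIV) g"
  shows "continuous_map X (discrete_topology UNIV) (\<lambda>x. \<phi> (f x) (g x))"
proof -
  have "continuous_map X (discrete_topology (UNIV \<times> UNIV)) (\<lambda>x. (f x, g x))"
    unfolding prod_topology_discrete_topology using assms by (rule continuous_map_pairedI)
  moreover have "continuous_map (discrete_topology (UNIV \<times> UNIV)) (discrete_topology UNIV) (case_prod \<phi>)"
    by simp
  ultimately have "continuous_map X (discrete_topology UNIV) (case_prod \<phi> \<circ> (\<lambda>x. (f x, g x)))"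
    by (rule continuous_map_compose)
  then show ?thesis by (simp add: o_def)
qed

definition clopenin :: "'a topology \<Rightarrow> 'a set \<Rightarrow> bool" where
  "clopenin X V \<longleftrightarrow> closedin X V \<and> openin X V"

lemma clopenin_Int: "clopenin X A \<Longrightarrow> clopenin X B \<Longrightarrow> clopenin X (A \<inter> B)"
  and clopenin_Un: "clopenin X A \<Longrightarrow> clopenin X B \<Longrightarrow> clopenin X (A \<union> B)"
  and clopenin_diff: "clopenin X A \<Longrightarrow> clopenin X B \<Longrightarrow> clopenin X (A - B)"
  and clopenin_topspace: "clopenin X (topspace X)"
  and clopenin_empty: "clopenin X {}"
  and clopenin_subset: "clopenin X A \<Longrightarrow> A \<subseteq> topspace X"
  by (auto simp: clopenin_def closedin_subset)

lemma continuous_map_discrete_clopen_membership: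
  assumes "clopenin X V"
  shows "continuous_map X (discrete_topology UNIV) (\<lambda>x. x \<in> V)"
  unfolding continuous_map_def
proof (intro conjI allI impI)
  fix B :: "bool set"
  have "(x \<in> V) \<in> B \<longleftrightarrow> (x \<in> V \<and> True \<in> B) \<or> (x \<notin> V \<and> False \<in> B)" for x
    by (cases "x \<in> V") auto
  then have "{x \<in> topspace X. (x \<in> V) \<in> B} =
        (if True \<in> B then V else {}) \<union> (if False \<in> B then topspace X - V else {})"
    using clopenin_subset[OF assms] by auto
  then show "openin X {x \<in> topspace X. (x \<in> V) \<in> B}"
    using assms by (auto simp: clopenin_def)
qed auto

lemma topspace_Cp_top [simp]: "topspace (Cp_top X) = Cp_carrier X"
proof -
  have "Cp_carrier X \<subseteq> topspace (product_topology (\<lambda>_. discrete_topology (UNIV :: int set)) (topspace X))"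
    by (auto simp: Cp_carrier_def topspace_product_topology_alt extensional_def)
  then show ?thesis unfolding Cp_top_def by auto
qed

lemma Cp_carrier_continuous:
  "f \<in> Cp_carrier X \<Longrightarrow> continuous_map X (discrete_topology UNIV) f"
  by (simp add: Cp_carrier_def)

lemma restrict_in_Cp_carrier:
  "continuous_map X (discrete_topology UNIV) f \<Longrightarrow> restrict f (topspace X) \<in> Cp_carrier X"
  unfolding Cp_carrier_def by (auto elim: continuous_map_eq)

lemma Cp_carrier_eqI:
  assumes "f \<in> Cp_carrier X" "g \<in> Cp_carrier X" "\<And>x. x \<in> topspace X \<Longrightarrow> f x = g x"
  shows "f = g"
  using assms by (auto simp: Cp_carrier_def intro: extensionalityI)

lemma openin_Cp_top_agreeing:
  assumes "finite F" "F \<subseteq> topspace X"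
  shows "openin (Cp_top X) {g \<in> Cp_carrier X. \<forall>x\<in>F. g x = f x}"
proof -
  define B where "B = (\<lambda>i. if i \<in> F then {f i} else (UNIV :: int set))"
  have "openin (product_topology (\<lambda>_. discrete_topology (UNIV :: int set)) (topspace X)) (Pi\<^sub>E (topspace X) B)"
    by (rule product_topology_basis) (use assms(1) in \<open>auto simp: B_def intro: finite_subset\<close>)
  then have "openin (Cp_top X) (Cp_carrier X \<inter> Pi\<^sub>E (topspace X) B)"
    unfolding Cp_top_def by (rule openin_subtopology_Int2)
  moreover have "Cp_carrier X \<inter> Pi\<^sub>E (topspace X) B = {g \<in> Cp_carrier X. \<forall>x\<in>F. g x = f x}"
    using assms(2) by (fastforce simp: B_def PiE_iff Cp_carrier_def extensional_def)
  ultimately show ?thesis by simp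
qed

lemma openin_Cp_top:
  "openin (Cp_top X) U \<longleftrightarrow> U \<subseteq> Cp_carrier X \<and>
     (\<forall>f\<in>U. \<exists>F. finite F \<and> F \<subseteq> topspace X \<and> (\<forall>g\<in>Cp_carrier X. (\<forall>x\<in>F. g x = f x) \<longrightarrow> g \<in> U))"
  (is "_ \<longleftrightarrow> _ \<and> (\<forall>f\<in>U. ?nbhd f)")
proof
  assume "openin (Cp_top X) U"
  then obtain T where T: "openin (product_topology (\<lambda>_. discrete_topology (UNIV :: int set)) (topspace X)) T"
    and U: "U = T \<inter> Cp_carrier X"
    unfolding Cp_top_def openin_subtopology by auto
  have "?nbhd f" if "f \<in> U" for f
  proof -
    from T that U obtain V where V: "finite {i \<in> topspace X. V i \<noteq> UNIV}" "f \<in> Pi\<^sub>E (topspace X) V"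
      "Pi\<^sub>E (topspace X) V \<subseteq> T"
      unfolding openin_product_topology_alt by force
    have "g \<in> U" if "g \<in> Cp_carrier X" "\<forall>x\<in>{i \<in> topspace X. V i \<noteq> UNIV}. g x = f x" for g
    proof -
      have "g \<in> Pi\<^sub>E (topspace X) V"
        using that V(2) by (auto simp: PiE_iff Cp_carrier_def)
      then show ?thesis using V(3) U that(1) by auto
    qed
    then show ?thesis using V(1) by (intro exI[of _ "{i \<in> topspace X. V i \<noteq> UNIV}"]) auto
  qed
  then show "U \<subseteq> Cp_carrier X \<and> (\<forall>f\<in>U. ?nbhd f)" using U by auto
next
  assume R: "U \<subseteq> Cp_carrier X \<and> (\<forall>f\<in>U. ?nbhd f)"
  show "openin (Cp_top X) U"
  proof (subst openin_subopen, intro ballI)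
    fix f assume f: "f \<in> U"
    then obtain F where "finite F" "F \<subseteq> topspace X" "\<forall>g\<in>Cp_carrier X. (\<forall>x\<in>F. g x = f x) \<longrightarrow> g \<in> U"
      using R by blast
    moreover have "f \<in> Cp_carrier X" using f R by blast
    ultimately show "\<exists>T. openin (Cp_top X) T \<and> f \<in> T \<and> T \<subseteq> U"
      by (intro exI[of _ "{g \<in> Cp_carrier X. \<forall>x\<in>F. g x = f x}"] conjI openin_Cp_top_agreeing) auto
  qed
qed

lemma continuous_map_Cp_point_evaluation:
  assumes "x \<in> topspace X"
  shows "continuous_map (Cp_top X) (discrete_topology UNIV) (\<lambda>g. g x)"
  unfolding Cp_top_def
  by (rule continuous_map_from_subtopology, rule continuous_map_product_projection) (use assms in simp)

lemma finite_point_values_compactin_Cp: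
  assumes "compactin (Cp_top X) K" "x \<in> topspace X"
  shows "finite ((\<lambda>g. g x) ` K)"
  using image_compactin[OF assms(1) continuous_map_Cp_point_evaluation[OF assms(2)]]
  by (simp add: compactin_discrete_topology)

definition Cp_zero :: "'a topology \<Rightarrow> 'a \<Rightarrow> int" where
  "Cp_zero X = restrict (\<lambda>x. 0) (topspace X)"

definition Cp_diff :: "'a topology \<Rightarrow> ('a \<Rightarrow> int) \<Rightarrow> ('a \<Rightarrow> int) \<Rightarrow> 'a \<Rightarrow> int" where
  "Cp_diff X f g = restrict (\<lambda>x. f x - g x) (topspace X)"

definition Cp_scale :: "'a topology \<Rightarrow> int \<Rightarrow> ('a \<Rightarrow> int) \<Rightarrow> 'a \<Rightarrow> int" where
  "Cp_scale X n f = restrict (\<lambda>x. n * f x) (topspace X)"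

definition Cp_cut :: "'a topology \<Rightarrow> 'a set \<Rightarrow> ('a \<Rightarrow> int) \<Rightarrow> 'a \<Rightarrow> int" where
  "Cp_cut X V f = restrict (\<lambda>x. if x \<in> V then f x else 0) (topspace X)"

lemma Cp_zero_in [simp]: "Cp_zero X \<in> Cp_carrier X"
  unfolding Cp_zero_def by (rule restrict_in_Cp_carrier) simp

lemma Cp_add_in [simp]: "f \<in> Cp_carrier X \<Longrightarrow> g \<in> Cp_carrier X \<Longrightarrow> Cp_add X f g \<in> Cp_carrier X"
  unfolding Cp_add_def
  by (intro restrict_in_Cp_carrier continuous_map_discrete_combine[where \<phi>="(+)"] Cp_carrier_continuous)

lemma Cp_diff_in [simp]: "f \<in> Cp_carrier X \<Longrightarrow> g \<in> Cp_carrier X \<Longrightarrow> Cp_diff X f g \<in> Cp_carrier X"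
  unfolding Cp_diff_def
  by (intro restrict_in_Cp_carrier continuous_map_discrete_combine[where \<phi>="(-)"] Cp_carrier_continuous)

lemma Cp_scale_in [simp]: "f \<in> Cp_carrier X \<Longrightarrow> Cp_scale X n f \<in> Cp_carrier X"
  unfolding Cp_scale_def
  by (intro restrict_in_Cp_carrier continuous_map_discrete_combine[where \<phi>="\<lambda>a _. n * a" and g=f]
      Cp_carrier_continuous)

lemma Cp_cut_in [simp]: "f \<in> Cp_carrier X \<Longrightarrow> clopenin X V \<Longrightarrow> Cp_cut X V f \<in> Cp_carrier X"
  unfolding Cp_cut_def
  by (intro restrict_in_Cp_carrier
      continuous_map_discrete_combine[where \<phi>="\<lambda>a b. if b then a else 0" and g="\<lambda>x. x \<in> V"]
      Cp_carrier_continuous continuous_map_discrete_clopen_membership)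

lemma Cp_ops_apply [simp]:
  "x \<in> topspace X \<Longrightarrow> Cp_zero X x = 0"
  "x \<in> topspace X \<Longrightarrow> Cp_add X f g x = f x + g x"
  "x \<in> topspace X \<Longrightarrow> Cp_diff X f g x = f x - g x"
  "x \<in> topspace X \<Longrightarrow> Cp_scale X n f x = n * f x"
  "x \<in> topspace X \<Longrightarrow> Cp_cut X V f x = (if x \<in> V then f x else 0)"
  by (auto simp: Cp_zero_def Cp_add_def Cp_diff_def Cp_scale_def Cp_cut_def)

lemma Cp_add_commute: "f \<in> Cp_carrier X \<Longrightarrow> g \<in> Cp_carrier X \<Longrightarrow> Cp_add X f g = Cp_add X g f"
  by (rule Cp_carrier_eqI[where X=X]) auto

lemma character_in_circle: "c \<in> characters G add \<Longrightarrow> x \<in> topspace G \<Longrightarrow> c x \<in> circle"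
  unfolding characters_def using continuous_map_image_subset_topspace by fastforce

lemma character_norm: "c \<in> characters G add \<Longrightarrow> x \<in> topspace G \<Longrightarrow> cmod (c x) = 1"
  using character_in_circle by (fastforce simp: circle_def)

lemma character_add:
  "c \<in> characters G add \<Longrightarrow> x \<in> topspace G \<Longrightarrow> y \<in> topspace G \<Longrightarrow> c (add x y) = c x * c y"
  unfolding characters_def by simp

lemma continuous_map_character: "c \<in> characters G add \<Longrightarrow> continuous_map G euclidean c"
  unfolding characters_def using continuous_map_into_fulltopology by blast

lemma dual_add_in_characters:
  assumes c: "c \<in> characters G add" and d: "d \<in> characters G add"
    and comm: "\<And>x y. x \<in> topspace G \<Longrightarrow> y \<in> topspace G \<Longrightarrow> add x y = add y x"
    and closed: "\<And>x y. x \<in> topspace G \<Longrightarrow> y \<in> topspace G \<Longrightarrow> add x y \<in> topspace G"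
  shows "dual_add G c d \<in> characters G add"
proof -
  have "continuous_map G euclidean (\<lambda>x. c x * d x)"
    using continuous_map_character[OF c] continuous_map_character[OF d]
    by (simp add: continuous_map_atin tendsto_mult)
  then have "continuous_map G euclidean (dual_add G c d)"
    by (rule continuous_map_eq) (simp add: dual_add_def)
  moreover have "dual_add G c d ` topspace G \<subseteq> circle"
    using character_norm[OF c] character_norm[OF d] by (auto simp: dual_add_def circle_def norm_mult)
  ultimately have "continuous_map G (subtopology euclidean circle) (dual_add G c d)"
    by (simp add: continuous_map_in_subtopology image_subset_iff_funcset)
  moreover have "\<forall>x\<in>topspace G. \<forall>y\<in>topspace G. dual_add G c d (add x y) = dual_add G c d x * dual_add G c d y"
    using c d closed comm unfolding characters_def dual_add_def by (auto simp: algebra_simps)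
  ultimately show ?thesis unfolding characters_def dual_add_def by auto
qed

lemma topspace_dual_top [simp]: "topspace (dual_top G add) = characters G add"
proof -
  have "characters G add \<in> {{c \<in> characters G add. c ` K \<subseteq> U} | K U. compactin G K \<and> open U}"
    by (rule CollectI, rule exI[of _ "{}"], rule exI[of _ UNIV]) auto
  then show ?thesis unfolding dual_top_def topology_generated_by_topspace by auto
qed

lemma openin_dual_top_subbasic:
  "compactin G K \<Longrightarrow> open U \<Longrightarrow> openin (dual_top G add) {c \<in> characters G add. c ` K \<subseteq> U}"
  unfolding dual_top_def by (rule topology_generated_by_Basis) blast

lemma continuous_map_into_dual_top:
  assumes "\<And>t. t \<in> topspace T \<Longrightarrow> h t \<in> characters G add"
    and "\<And>K U. compactin G K \<Longrightarrow> open U \<Longrightarrow> openin T {t \<in> topspace T. h t ` K \<subseteq> U}"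
  shows "continuous_map T (dual_top G add) h"
  unfolding dual_top_def
proof (rule continuous_on_generated_topo)
  fix V assume "V \<in> {{c \<in> characters G add. c ` K \<subseteq> U} | K U. compactin G K \<and> open U}"
  then obtain K U where KU: "compactin G K" "open U" "V = {c \<in> characters G add. c ` K \<subseteq> U}"
    by blast
  have "h -` V \<inter> topspace T = {t \<in> topspace T. h t ` K \<subseteq> U}" using KU(3) assms(1) by auto
  then show "openin T (h -` V \<inter> topspace T)" using assms(2)[OF KU(1,2)] by simp
next
  show "h ` topspace T \<subseteq> \<Union> {{c \<in> characters G add. c ` K \<subseteq> U} | K U. compactin G K \<and> open U}"
    using topspace_dual_top[of G add] assms(1)
    unfolding dual_top_def topology_generated_by_topspace by auto
qed

lemma evaluation_in_characters_dual:
  assumes comm: "\<And>x y. x \<in> topspace G \<Longrightarrow> y \<in> topspace G \<Longrightarrow> add x y = add y x"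
    and closed: "\<And>x y. x \<in> topspace G \<Longrightarrow> y \<in> topspace G \<Longrightarrow> add x y \<in> topspace G"
    and g: "g \<in> topspace G"
  shows "evaluation G add g \<in> characters (dual_top G add) (dual_add G)"
proof -
  have "continuous_map (dual_top G add) (subtopology euclidean circle) (evaluation G add g)"
    unfolding continuous_map_def
  proof (intro conjI allI impI)
    show "evaluation G add g \<in> topspace (dual_top G add) \<rightarrow> topspace (subtopology euclidean circle)"
      using character_in_circle g by (auto simp: evaluation_def)
    fix V assume "openin (subtopology euclidean circle) V"
    then obtain U where U: "open U" "V = U \<inter> circle" by (auto simp: openin_open)
    have "{c \<in> topspace (dual_top G add). evaluation G add g c \<in> V} = {c \<in> characters G add. c ` {g} \<subseteq> U}"
      using U(2) character_in_circle g by (auto simp: evaluation_def)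
    moreover have "openin (dual_top G add) {c \<in> characters G add. c ` {g} \<subseteq> U}"
      by (rule openin_dual_top_subbasic) (use g U in auto)
    ultimately show "openin (dual_top G add) {c \<in> topspace (dual_top G add). evaluation G add g c \<in> V}"
      by simp
  qed
  moreover have "\<forall>c\<in>topspace (dual_top G add). \<forall>d\<in>topspace (dual_top G add).
      evaluation G add g (dual_add G c d) = evaluation G add g c * evaluation G add g d"
    using g dual_add_in_characters[OF _ _ comm closed] by (simp add: evaluation_def dual_add_def)
  moreover have "evaluation G add g \<in> extensional (topspace (dual_top G add))"
    by (simp add: evaluation_def)
  ultimately show ?thesis
    unfolding characters_def by blast
qed

lemma evaluation_add:
  assumes "x \<in> topspace G" "y \<in> topspace G"
  shows "evaluation G add (add x y) = dual_add (dual_top G add) (evaluation G add x) (evaluation G add y)"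
  using assms by (auto simp: evaluation_def dual_add_def character_add fun_eq_iff)

abbreviation "Cp_characters X \<equiv> characters (Cp_top X) (Cp_add X)"
abbreviation "Cp_dual X \<equiv> dual_top (Cp_top X) (Cp_add X)"
abbreviation "Cp_bidual X \<equiv> dual_top (Cp_dual X) (dual_add (Cp_top X))"
abbreviation "Cp_eval X \<equiv> evaluation (Cp_top X) (Cp_add X)"

lemma Cp_eval_in_bidual: "f \<in> Cp_carrier X \<Longrightarrow> Cp_eval X f \<in> topspace (Cp_bidual X)"
  using evaluation_in_characters_dual[of "Cp_top X" "Cp_add X" f] by (simp add: Cp_add_commute)

lemma Cp_character_zero:
  assumes "c \<in> Cp_characters X" shows "c (Cp_zero X) = 1"
proof -
  have "Cp_add X (Cp_zero X) (Cp_zero X) = Cp_zero X" by (rule Cp_carrier_eqI[where X=X]) auto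
  then have "c (Cp_zero X) = c (Cp_zero X) * c (Cp_zero X)"
    using character_add[OF assms, of "Cp_zero X" "Cp_zero X"] by simp
  then show ?thesis using character_norm[OF assms, of "Cp_zero X"] by auto
qed

lemma Cp_character_diff:
  assumes "c \<in> Cp_characters X" "f \<in> Cp_carrier X" "g \<in> Cp_carrier X"
  shows "c f = c (Cp_diff X f g) * c g"
proof -
  have "Cp_add X (Cp_diff X f g) g = f" by (rule Cp_carrier_eqI[where X=X]) (use assms in auto)
  then show ?thesis using character_add[OF assms(1), of "Cp_diff X f g" g] assms by simp
qed

lemma Cp_character_scale:
  assumes "c \<in> Cp_characters X" "f \<in> Cp_carrier X"
  shows "c (Cp_scale X (int n) f) = c f ^ n"
proof (induction n)
  case 0
  have "Cp_scale X (int 0) f = Cp_zero X" by (rule Cp_carrier_eqI[where X=X]) (use assms in auto)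
  then show ?case using Cp_character_zero[OF assms(1)] by simp
next
  case (Suc n)
  have "Cp_scale X (int (Suc n)) f = Cp_add X f (Cp_scale X (int n) f)"
    by (rule Cp_carrier_eqI[where X=X]) (use assms in \<open>auto simp: algebra_simps\<close>)
  then show ?case using character_add[OF assms(1), of f "Cp_scale X (int n) f"] assms Suc by simp
qed

section \<open>The circle has no small subgroups\<close>

lemma norm_power2_sub_one_circle:
  fixes w :: complex assumes "cmod w = 1"
  shows "(cmod (w\<^sup>2 - 1))\<^sup>2 = (cmod (w - 1))\<^sup>2 * (4 - (cmod (w - 1))\<^sup>2)"
proof -
  have "(cmod (w + 1))\<^sup>2 + (cmod (w - 1))\<^sup>2 = 2 * (cmod w)\<^sup>2 + 2 * (cmod 1)\<^sup>2"
    using dot_norm[of w 1] dot_norm_neg[of w 1] by (simp add: field_simps)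
  then have "(cmod (w + 1))\<^sup>2 = 4 - (cmod (w - 1))\<^sup>2" using assms by simp
  moreover have "w\<^sup>2 - 1 = (w - 1) * (w + 1)" by (simp add: power2_eq_square algebra_simps)
  ultimately show ?thesis by (simp add: norm_mult power_mult_distrib)
qed

lemma circle_powers_near_one_imp_eq_one:
  fixes z :: complex assumes "cmod z = 1" and small: "\<And>n. cmod (z ^ n - 1) < 1"
  shows "z = 1"
proof (rule ccontr)
  assume "z \<noteq> 1"
  define d where "d = (\<lambda>w::complex. (cmod (w - 1))\<^sup>2)"
  have d_small: "d (z ^ n) < 1" for n
    using small[of n] by (simp add: d_def power_less_one_iff)
  \<comment> \<open>Squaring multiplies \<open>d\<close> by \<open>4 - d \<ge> 3\<close>, so \<open>d\<close> grows along \<open>z^(2^k)\<close>.\<close>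
  have grow: "3 ^ k * d z \<le> d (z ^ (2 ^ k))" for k
  proof (induction k)
    case (Suc k)
    let ?w = "z ^ (2 ^ k)"
    have "d (?w\<^sup>2) = d ?w * (4 - d ?w)"
      using norm_power2_sub_one_circle[of ?w] assms(1) by (simp add: d_def norm_power)
    also have "\<dots> \<ge> 3 * d ?w"
      using d_small[of "2 ^ k"] mult_left_mono[of "d ?w" 1 "d ?w"] by (simp add: d_def algebra_simps)
    finally show ?case
      using Suc by (simp add: power_mult[symmetric] mult.commute)
  qed simp
  have "d z > 0" using \<open>z \<noteq> 1\<close> by (simp add: d_def)
  then obtain k where "1 < 3 ^ k * d z"
    using real_arch_pow[of 3 "1 / d z"] by (auto simp: field_simps)
  then show False using grow[of k] d_small[of "2 ^ k"] by linarith
qed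

section \<open>Supports of characters\<close>

definition supported_on :: "'a topology \<Rightarrow> (('a \<Rightarrow> int) \<Rightarrow> complex) \<Rightarrow> 'a set \<Rightarrow> bool" where
  "supported_on X c F \<longleftrightarrow> (\<forall>g\<in>Cp_carrier X. (\<forall>x\<in>F. g x = 0) \<longrightarrow> c g = 1)"

lemma supported_on_mono: "supported_on X c F \<Longrightarrow> F \<subseteq> G \<Longrightarrow> supported_on X c G"
  unfolding supported_on_def by blast

lemma supported_on_agree:
  assumes "c \<in> Cp_characters X" "supported_on X c F" "F \<subseteq> topspace X"
    and "f \<in> Cp_carrier X" "g \<in> Cp_carrier X" "\<And>x. x \<in> F \<Longrightarrow> f x = g x"
  shows "c f = c g"
proof -
  have "c (Cp_diff X f g) = 1" using assms by (auto simp: supported_on_def subsetD)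
  then show ?thesis using Cp_character_diff[OF assms(1,4,5)] by simp
qed

lemma Cp_character_finitely_supported:
  assumes c: "c \<in> Cp_characters X"
  shows "\<exists>F. finite F \<and> F \<subseteq> topspace X \<and> supported_on X c F"
proof -
  let ?near = "{g \<in> Cp_carrier X. c g \<in> circle \<inter> ball 1 1}"
  have "continuous_map (Cp_top X) (subtopology euclidean circle) c"
    using c by (simp add: characters_def)
  moreover have "openin (subtopology euclidean circle) (circle \<inter> ball 1 1)"
    by (intro openin_subtopology_Int2) auto
  ultimately have "openin (Cp_top X) {g \<in> topspace (Cp_top X). c g \<in> circle \<inter> ball 1 1}"
    by (rule openin_continuous_map_preimage)
  then have "openin (Cp_top X) ?near" by simp
  moreover have "Cp_zero X \<in> ?near"
    using Cp_character_zero[OF c] by (auto simp: circle_def)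
  ultimately obtain F where F: "finite F" "F \<subseteq> topspace X"
    "\<forall>g\<in>Cp_carrier X. (\<forall>x\<in>F. g x = Cp_zero X x) \<longrightarrow> g \<in> ?near"
    unfolding openin_Cp_top by blast
  have "supported_on X c F"
    unfolding supported_on_def
  proof (intro ballI impI)
    fix g assume g: "g \<in> Cp_carrier X" "\<forall>x\<in>F. g x = 0"
    \<comment> \<open>The multiples of \<open>g\<close> also vanish on \<open>F\<close>, so no power of \<open>c g\<close> leaves \<open>ball 1 1\<close>.\<close>
    have "Cp_scale X (int n) g \<in> ?near" for n
      using F(2,3) g by (auto simp: subsetD)
    then have "cmod (c g ^ n - 1) < 1" for n
      using Cp_character_scale[OF c g(1)] by (simp add: dist_norm norm_minus_commute)
    then show "c g = 1"
      using circle_powers_near_one_imp_eq_one character_norm[OF c] g(1) by simp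
  qed
  then show ?thesis using F by blast
qed

lemma zero_dimensional_clopen_avoiding_finite:
  assumes "t1_space X" "zero_dimensional X"
    and "a \<in> topspace X" "finite B" "a \<notin> B"
  obtains V where "clopenin X V" "a \<in> V" "V \<inter> B = {}"
proof -
  have "closedin X (B \<inter> topspace X)"
    using assms(1,4) by (simp add: t1_space_closedin_finite)
  then have "openin X (topspace X - B)"
    by (metis Diff_Int2 inf.idem openin_diff openin_topspace)
  moreover have "a \<in> topspace X - B" using assms(3,5) by auto
  ultimately obtain U V where V: "closedin X V \<and> openin X V" "a \<in> U" "U \<subseteq> V" "V \<subseteq> topspace X - B"
    using assms(2) unfolding zero_dimensional_def neighbourhood_base_of by meson
  show ?thesis by (rule that[of V]) (use V in \<open>auto simp: clopenin_def\<close>)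
qed

lemma zero_dimensional_clopen_separating_finite:
  assumes "t1_space X" "zero_dimensional X"
    and "finite A" "A \<subseteq> topspace X" "finite B" "A \<inter> B = {}"
  obtains V where "clopenin X V" "A \<subseteq> V" "V \<inter> B = {}"
proof -
  from assms(3,4,6) have "\<exists>V. clopenin X V \<and> A \<subseteq> V \<and> V \<inter> B = {}"
  proof (induction A rule: finite_induct)
    case (insert a A)
    then obtain V where "clopenin X V" "A \<subseteq> V" "V \<inter> B = {}" by auto
    moreover obtain W where "clopenin X W" "a \<in> W" "W \<inter> B = {}"
      using zero_dimensional_clopen_avoiding_finite[OF assms(1,2) _ assms(5)] insert.prems by auto
    ultimately show ?case by (intro exI[of _ "V \<union> W"]) (auto intro: clopenin_Un)
  qed (use clopenin_empty in blast)
  then show ?thesis using that by blast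
qed

lemma zero_dimensional_split_infinite:
  assumes "t1_space X" "zero_dimensional X"
    and "clopenin X R" "E \<subseteq> R" "infinite E"
  obtains R' E' a U where "clopenin X R'" "R' \<subseteq> R" "E' \<subseteq> E" "E' \<subseteq> R'" "infinite E'"
    "a \<in> E" "clopenin X U" "a \<in> U" "U \<subseteq> R - R'"
proof -
  obtain p where p: "p \<in> E" using assms(5) infinite_imp_nonempty by blast
  have "infinite (E - {p})" using assms(5) by simp
  then obtain q where q: "q \<in> E" "q \<noteq> p" using infinite_imp_nonempty by blast
  have "p \<in> topspace X" using p assms(4) clopenin_subset[OF assms(3)] by blast
  then obtain V where V: "clopenin X V" "p \<in> V" "V \<inter> {q} = {}"
    using zero_dimensional_clopen_avoiding_finite[OF assms(1,2), of p "{q}"] q by blast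
  have clopen: "clopenin X (R \<inter> V)" "clopenin X (R - V)"
    using assms(3) V(1) by (simp_all add: clopenin_Int clopenin_diff)
  have "E = (E \<inter> V) \<union> (E - V)" by blast
  then have "infinite (E \<inter> V) \<or> infinite (E - V)"
    using assms(5) finite_Un by metis
  then show ?thesis
  proof
    assume "infinite (E \<inter> V)"
    show ?thesis
      by (rule that[of "R \<inter> V" "E \<inter> V" q "R - V"]) (use clopen \<open>infinite (E \<inter> V)\<close> assms(4) q V in auto)
  next
    assume "infinite (E - V)"
    show ?thesis
      by (rule that[of "R - V" "E - V" p "R \<inter> V"]) (use clopen \<open>infinite (E - V)\<close> assms(4) p V in auto)
  qed
qed

lemma zero_dimensional_clopen_descent:
  assumes "t1_space X" "zero_dimensional X" "D \<subseteq> topspace X" "infinite D"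
  shows "\<exists>R. decseq R \<and> (\<forall>n. \<exists>a U. a \<in> D \<and> clopenin X U \<and> a \<in> U \<and> U \<subseteq> R n - R (Suc n))"
proof -
  \<comment> \<open>States \<open>(R, E)\<close>: a clopen set \<open>R\<close> still containing an infinite part \<open>E\<close> of \<open>D\<close>.\<close>
  define P where "P = (\<lambda>(_::nat) s. clopenin X (fst s) \<and> snd s \<subseteq> fst s \<and> infinite (snd s) \<and> snd s \<subseteq> D)"
  define Q where "Q = (\<lambda>(_::nat) s s'. fst s' \<subseteq> fst s \<and> snd s' \<subseteq> snd s \<and>
     (\<exists>a U. a \<in> snd s \<and> clopenin X U \<and> a \<in> U \<and> U \<subseteq> fst s - fst s'))"
  have "\<exists>s. \<forall>n. P n (s n) \<and> Q n (s n) (s (Suc n))"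
  proof (rule dependent_nat_choice)
    show "\<exists>s. P 0 s"
      using assms(3,4) clopenin_topspace by (auto simp: P_def intro!: exI[of _ "(topspace X, D)"])
  next
    fix s n assume "P n s"
    then have s: "clopenin X (fst s)" "snd s \<subseteq> fst s" "infinite (snd s)" "snd s \<subseteq> D"
      by (simp_all add: P_def)
    obtain R' E' a U where "clopenin X R'" "R' \<subseteq> fst s" "E' \<subseteq> snd s" "E' \<subseteq> R'" "infinite E'"
      "a \<in> snd s" "clopenin X U" "a \<in> U" "U \<subseteq> fst s - R'"
      by (rule zero_dimensional_split_infinite[OF assms(1,2) s(1-3)])
    then show "\<exists>s'. P (Suc n) s' \<and> Q n s s'"
      using s(4) by (intro exI[of _ "(R', E')"]) (auto simp: P_def Q_def)
  qed
  then obtain s where s: "\<And>n. P n (s n)" "\<And>n. Q n (s n) (s (Suc n))" by blast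
  have "decseq (\<lambda>n. fst (s n))"
    using s(2) by (intro decseq_SucI) (simp add: Q_def)
  moreover have "\<exists>a U. a \<in> D \<and> clopenin X U \<and> a \<in> U \<and> U \<subseteq> fst (s n) - fst (s (Suc n))" for n
    using s(1)[of n] s(2)[of n] unfolding P_def Q_def by blast
  ultimately show ?thesis by blast
qed

lemma zero_dimensional_disjoint_clopen_sequence:
  assumes "t1_space X" "zero_dimensional X" "D \<subseteq> topspace X" "infinite D"
  obtains a :: "nat \<Rightarrow> 'a" and U where "\<And>n. a n \<in> D" "\<And>n. clopenin X (U n)" "\<And>n. a n \<in> U n"
    "disjoint_family U"
proof -
  obtain R where R: "decseq R" "\<forall>n. \<exists>a U. a \<in> D \<and> clopenin X U \<and> a \<in> U \<and> U \<subseteq> R n - R (Suc n)"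
    using zero_dimensional_clopen_descent[OF assms] by blast
  from R(2) have "\<exists>a. \<forall>n. \<exists>U. a n \<in> D \<and> clopenin X U \<and> a n \<in> U \<and> U \<subseteq> R n - R (Suc n)"
    by (rule choice)
  then obtain a where "\<forall>n. \<exists>U. a n \<in> D \<and> clopenin X U \<and> a n \<in> U \<and> U \<subseteq> R n - R (Suc n)"
    by blast
  then have "\<exists>U. \<forall>n. a n \<in> D \<and> clopenin X (U n) \<and> a n \<in> U n \<and> U n \<subseteq> R n - R (Suc n)"
    by (rule choice)
  then obtain U where aU: "\<And>n. a n \<in> D" "\<And>n. clopenin X (U n)" "\<And>n. a n \<in> U n"
    "\<And>n. U n \<subseteq> R n - R (Suc n)"
    by blast
  have disj: "U m \<inter> U n = {}" if "m < n" for m n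
    using aU(4)[of m] aU(4)[of n] decseqD[OF R(1), of "Suc m" n] that by auto
  have "disjoint_family U"
    unfolding disjoint_family_on_def
  proof (intro ballI impI)
    fix m n :: nat assume "m \<noteq> n"
    then consider "m < n" | "n < m" by linarith
    then show "U m \<inter> U n = {}"
      by cases (use disj[of m n] disj[of n m] in auto)
  qed
  then show ?thesis using that aU(1-3) by blast
qed

lemma supported_on_Int:
  assumes "t1_space X" "zero_dimensional X" "c \<in> Cp_characters X"
    and F: "finite F1" "F1 \<subseteq> topspace X" "finite F2" "F2 \<subseteq> topspace X"
    and supp: "supported_on X c F1" "supported_on X c F2"
  shows "supported_on X c (F1 \<inter> F2)"
  unfolding supported_on_def
proof (intro ballI impI)
  fix g assume g: "g \<in> Cp_carrier X" "\<forall>x\<in>F1 \<inter> F2. g x = 0"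
  obtain V where V: "clopenin X V" "F1 - F2 \<subseteq> V" "V \<inter> (F2 - F1) = {}"
    using zero_dimensional_clopen_separating_finite[OF assms(1,2), of "F1 - F2" "F2 - F1"] F by auto
  have V': "clopenin X (topspace X - V)" by (intro clopenin_diff clopenin_topspace V(1))
  \<comment> \<open>Split \<open>g\<close> into a part vanishing on \<open>F2\<close> and a part vanishing on \<open>F1\<close>.\<close>
  have "g = Cp_add X (Cp_cut X V g) (Cp_cut X (topspace X - V) g)"
    by (rule Cp_carrier_eqI[where X=X]) (use g(1) V V' in auto)
  then have "c g = c (Cp_cut X V g) * c (Cp_cut X (topspace X - V) g)"
    using character_add[OF assms(3)] g(1) V V' by (metis Cp_cut_in topspace_Cp_top)
  moreover have "c (Cp_cut X V g) = 1"
  proof -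
    have "\<forall>x\<in>F2. Cp_cut X V g x = 0" using g(2) V F(4) by (auto simp: subsetD)
    then show ?thesis using supp(2) g(1) V(1) by (simp add: supported_on_def)
  qed
  moreover have "c (Cp_cut X (topspace X - V) g) = 1"
  proof -
    have "\<forall>x\<in>F1. Cp_cut X (topspace X - V) g x = 0" using g(2) V F(2) by (auto simp: subsetD)
    then show ?thesis using supp(1) g(1) V' by (simp add: supported_on_def)
  qed
  ultimately show "c g = 1" by simp
qed

definition char_support :: "'a topology \<Rightarrow> (('a \<Rightarrow> int) \<Rightarrow> complex) \<Rightarrow> 'a set" where
  "char_support X c = \<Inter>{F. finite F \<and> F \<subseteq> topspace X \<and> supported_on X c F}"

lemma char_support_minimal:
  "finite F \<Longrightarrow> F \<subseteq> topspace X \<Longrightarrow> supported_on X c F \<Longrightarrow> char_support X c \<subseteq> F"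
  unfolding char_support_def by blast

lemma char_support:
  assumes "t1_space X" "zero_dimensional X" "c \<in> Cp_characters X"
  shows "finite (char_support X c)" "char_support X c \<subseteq> topspace X"
    "supported_on X c (char_support X c)"
proof -
  let ?P = "\<lambda>F. finite F \<and> F \<subseteq> topspace X \<and> supported_on X c F"
  obtain F0 where "?P F0" using Cp_character_finitely_supported[OF assms(3)] by blast
  \<comment> \<open>Finite supports are closed under intersection, so one of least cardinality is least.\<close>
  then obtain S where S: "?P S" "\<And>F. ?P F \<Longrightarrow> card S \<le> card F"
    using ex_has_least_nat[of ?P F0 card] by blast
  have least: "S \<subseteq> F" if "?P F" for F
  proof -
    have "supported_on X c (S \<inter> F)"
      using supported_on_Int[OF assms, of S F] S(1) that by blast
    then have "?P (S \<inter> F)" using S(1) by auto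
    then have "card S \<le> card (S \<inter> F)" by (rule S(2))
    then have "S \<inter> F = S" using S(1) card_mono[of S "S \<inter> F"] by (intro card_subset_eq) auto
    then show ?thesis by blast
  qed
  have "char_support X c = S"
  proof
    show "char_support X c \<subseteq> S" using S(1) char_support_minimal by blast
    show "S \<subseteq> char_support X c" unfolding char_support_def using least by blast
  qed
  then show "finite (char_support X c)" "char_support X c \<subseteq> topspace X"
    "supported_on X c (char_support X c)" using S(1) by auto
qed

lemma Cp_character_far_from_one_near_support:
  assumes "t1_space X" "zero_dimensional X" "c \<in> Cp_characters X"
    and a: "a \<in> char_support X c" and U: "clopenin X U" "a \<in> U"
  obtains f where "f \<in> Cp_carrier X" "\<And>x. x \<in> topspace X - U \<Longrightarrow> f x = 0" "1 \<le> cmod (c f - 1)"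
proof -
  let ?S = "char_support X c"
  note S = char_support[OF assms(1-3)]
  have "\<not> supported_on X c (?S - {a})"
    using char_support_minimal[of "?S - {a}" X c] S a by auto
  then obtain g where g: "g \<in> Cp_carrier X" "\<forall>x\<in>?S - {a}. g x = 0" "c g \<noteq> 1"
    unfolding supported_on_def by blast
  obtain V where V: "clopenin X V" "a \<in> V" "V \<inter> (?S - {a}) = {}"
    using zero_dimensional_clopen_avoiding_finite[OF assms(1,2), of a "?S - {a}"] S(1,2) a by auto
  define h where "h = Cp_cut X (U \<inter> V) g"
  have h: "h \<in> Cp_carrier X" using g(1) U V by (simp add: h_def clopenin_Int)
  have "c h = c g"
    by (rule supported_on_agree[OF assms(3) S(3) S(2) h g(1)])
       (use S(2) U V g(2) in \<open>auto simp: h_def subsetD\<close>)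
  then obtain n where n: "\<not> cmod (c h ^ n - 1) < 1"
    using circle_powers_near_one_imp_eq_one character_norm[OF assms(3)] h g(3) by fastforce
  show ?thesis
  proof (rule that[of "Cp_scale X (int n) h"])
    show "1 \<le> cmod (c (Cp_scale X (int n) h) - 1)"
      using n Cp_character_scale[OF assms(3) h] by simp
  qed (use h in \<open>auto simp: h_def\<close>)
qed

section \<open>Compact sets of characters\<close>

lemma compactin_Cp_null_sequence:
  fixes f :: "nat \<Rightarrow> 'a \<Rightarrow> int"
  assumes fC: "\<And>n. f n \<in> Cp_carrier X"
    and fin: "\<And>x. x \<in> topspace X \<Longrightarrow> finite {n. f n x \<noteq> 0}"
  shows "compactin (Cp_top X) (insert (Cp_zero X) (f ` {N..}))"
  unfolding compactin_def
proof (intro conjI allI impI)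
  show "insert (Cp_zero X) (f ` {N..}) \<subseteq> topspace (Cp_top X)" using fC by auto
  fix \<U> assume \<U>: "(\<forall>U\<in>\<U>. openin (Cp_top X) U) \<and> insert (Cp_zero X) (f ` {N..}) \<subseteq> \<Union>\<U>"
  then obtain U0 where U0: "U0 \<in> \<U>" "Cp_zero X \<in> U0" "openin (Cp_top X) U0" by blast
  then obtain F where F: "finite F" "F \<subseteq> topspace X"
    "\<forall>g\<in>Cp_carrier X. (\<forall>x\<in>F. g x = Cp_zero X x) \<longrightarrow> g \<in> U0"
    unfolding openin_Cp_top by blast
  \<comment> \<open>Only the finitely many \<open>f n\<close> not vanishing on \<open>F\<close> can lie outside \<open>U0\<close>.\<close>
  define Bad where "Bad = (\<Union>x\<in>F. {n. f n x \<noteq> 0})"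
  have "finite Bad" unfolding Bad_def using F(1,2) fin by blast
  have "\<forall>n\<in>{N..}. \<exists>V. V \<in> \<U> \<and> f n \<in> V" using \<U> by blast
  from bchoice[OF this] obtain pick where pick: "\<forall>n\<in>{N..}. pick n \<in> \<U> \<and> f n \<in> pick n"
    by blast
  define \<F> where "\<F> = insert U0 (pick ` (Bad \<inter> {N..}))"
  have "f n \<in> \<Union>\<F>" if "n \<ge> N" for n
  proof (cases "n \<in> Bad")
    case True then show ?thesis using that pick by (auto simp: \<F>_def)
  next
    case False
    then have "f n \<in> U0" using F(2,3) fC by (auto simp: Bad_def subsetD)
    then show ?thesis by (auto simp: \<F>_def)
  qed
  then have "insert (Cp_zero X) (f ` {N..}) \<subseteq> \<Union>\<F>"
    using U0 by (auto simp: \<F>_def)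
  moreover have "finite \<F>" "\<F> \<subseteq> \<U>" using \<open>finite Bad\<close> U0(1) pick by (auto simp: \<F>_def)
  ultimately show "\<exists>\<F>. finite \<F> \<and> \<F> \<subseteq> \<U> \<and> insert (Cp_zero X) (f ` {N..}) \<subseteq> \<Union>\<F>" by blast
qed

lemma eventually_zero_on_finite:
  fixes f :: "nat \<Rightarrow> 'a \<Rightarrow> int"
  assumes "finite S" "\<And>x. x \<in> S \<Longrightarrow> finite {n. f n x \<noteq> (0::int)}"
  obtains N where "\<And>n x. N \<le> n \<Longrightarrow> x \<in> S \<Longrightarrow> f n x = 0"
proof -
  have "finite (\<Union>x\<in>S. {n. f n x \<noteq> 0})" using assms by blast
  then obtain N where N: "\<forall>n\<in>(\<Union>x\<in>S. {n. f n x \<noteq> 0}). n < N"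
    using finite_nat_set_iff_bounded by blast
  show ?thesis
  proof (rule that)
    fix n x assume "N \<le> n" "x \<in> S"
    show "f n x = 0"
    proof (rule ccontr)
      assume "f n x \<noteq> 0"
      then have "n < N" using N \<open>x \<in> S\<close> by blast
      then show False using \<open>N \<le> n\<close> by simp
    qed
  qed
qed

lemma Cp_character_eventually_one_on_null_sequence:
  fixes f :: "nat \<Rightarrow> 'a \<Rightarrow> int"
  assumes "t1_space X" "zero_dimensional X" "c \<in> Cp_characters X"
    and fC: "\<And>n. f n \<in> Cp_carrier X"
    and fin: "\<And>x. x \<in> topspace X \<Longrightarrow> finite {n. f n x \<noteq> 0}"
  shows "\<exists>N. \<forall>n\<ge>N. c (f n) = 1"
proof -
  note S = char_support[OF assms(1-3)]
  obtain N where "\<And>n x. N \<le> n \<Longrightarrow> x \<in> char_support X c \<Longrightarrow> f n x = 0"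
    using eventually_zero_on_finite[of "char_support X c" f] S(1,2) fin by blast
  then show ?thesis using S(3) fC unfolding supported_on_def by blast
qed

lemma compactin_Cp_dual_uniform_on_null_sequence:
  fixes f :: "nat \<Rightarrow> 'a \<Rightarrow> int"
  assumes "t1_space X" "zero_dimensional X" and K: "compactin (Cp_dual X) K"
    and fC: "\<And>n. f n \<in> Cp_carrier X"
    and fin: "\<And>x. x \<in> topspace X \<Longrightarrow> finite {n. f n x \<noteq> 0}"
  shows "\<exists>N. \<forall>n\<ge>N. \<forall>c\<in>K. cmod (c (f n) - 1) < 1"
proof -
  have KC: "K \<subseteq> Cp_characters X" using compactin_subset_topspace[OF K] by simp
  have "\<forall>c\<in>K. \<exists>N. \<forall>n\<ge>N. c (f n) = 1"
    using Cp_character_eventually_one_on_null_sequence[OF assms(1,2) _ fC fin] KC by blast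
  from bchoice[OF this] obtain Nc where Nc: "\<forall>c\<in>K. \<forall>n\<ge>Nc c. c (f n) = 1" by blast
  \<comment> \<open>Each \<open>Near c\<close> is open since \<open>f n \<rightarrow> 0\<close> makes the set it constrains compact.\<close>
  define Near where "Near = (\<lambda>c. {d \<in> Cp_characters X. d ` insert (Cp_zero X) (f ` {Nc c..}) \<subseteq> ball 1 1})"
  have "openin (Cp_dual X) (Near c)" for c
    unfolding Near_def by (intro openin_dual_top_subbasic compactin_Cp_null_sequence fC fin) simp_all
  moreover have "c \<in> Near c" if "c \<in> K" for c
  proof -
    have c: "c \<in> Cp_characters X" using that KC by blast
    have "c (Cp_zero X) = 1" "\<And>n. Nc c \<le> n \<Longrightarrow> c (f n) = 1"
      using Cp_character_zero[OF c] Nc that by auto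
    then show ?thesis using c by (auto simp: Near_def)
  qed
  ultimately have "\<exists>\<V>. finite \<V> \<and> \<V> \<subseteq> Near ` K \<and> K \<subseteq> \<Union>\<V>"
    by (intro compactinD[OF K]) auto
  then obtain \<V> where \<V>: "finite \<V>" "\<V> \<subseteq> Near ` K" "K \<subseteq> \<Union>\<V>" by blast
  then obtain K' where K': "finite K'" "K' \<subseteq> K" "K \<subseteq> \<Union>(Near ` K')"
    using finite_subset_image[OF \<V>(1,2)] by blast
  obtain N where N: "\<And>c. c \<in> K' \<Longrightarrow> Nc c < N"
    using K'(1) finite_nat_set_iff_bounded[of "Nc ` K'"] by blast
  have "cmod (c (f n) - 1) < 1" if n: "N \<le> n" and c: "c \<in> K" for n c
  proof -
    obtain c' where c': "c' \<in> K'" "c \<in> Near c'" "Nc c' \<le> n" using K'(3) N n c by force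
    then have "f n \<in> insert (Cp_zero X) (f ` {Nc c'..})" by auto
    moreover have "c ` insert (Cp_zero X) (f ` {Nc c'..}) \<subseteq> ball 1 1" using c'(2) by (simp add: Near_def)
    ultimately have "c (f n) \<in> ball 1 1" by blast
    then show ?thesis by (simp add: dist_norm norm_minus_commute)
  qed
  then show ?thesis by blast
qed

lemma Cp_characters_far_from_one_on_null_sequence:
  assumes "t1_space X" "zero_dimensional X" "K \<subseteq> Cp_characters X"
    and "infinite (\<Union>c\<in>K. char_support X c)"
  shows "\<exists>c f. (\<forall>n::nat. c n \<in> K \<and> f n \<in> Cp_carrier X \<and> 1 \<le> cmod (c n (f n) - 1)) \<and>
           (\<forall>x\<in>topspace X. finite {n. f n x \<noteq> 0})"
proof -
  define D where "D = (\<Union>c\<in>K. char_support X c)"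
  have "D \<subseteq> topspace X" using char_support(2)[OF assms(1,2)] assms(3) by (auto simp: D_def)
  then obtain a :: "nat \<Rightarrow> 'a" and U :: "nat \<Rightarrow> 'a set" where
    aU: "\<And>n. a n \<in> D" "\<And>n. clopenin X (U n)" "\<And>n. a n \<in> U n" and disj: "disjoint_family U"
    using zero_dimensional_disjoint_clopen_sequence[OF assms(1,2)] assms(4) unfolding D_def by blast
  have "\<forall>n. \<exists>c. c \<in> K \<and> a n \<in> char_support X c" using aU(1) unfolding D_def by blast
  from choice[OF this] obtain c where c: "\<forall>n. c n \<in> K \<and> a n \<in> char_support X (c n)" by blast
  have "\<forall>n. \<exists>g. g \<in> Cp_carrier X \<and> (\<forall>x\<in>topspace X - U n. g x = 0) \<and> 1 \<le> cmod (c n g - 1)"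
  proof
    fix n
    have "c n \<in> Cp_characters X" "a n \<in> char_support X (c n)" using c assms(3) by auto
    then obtain g where "g \<in> Cp_carrier X" "\<And>x. x \<in> topspace X - U n \<Longrightarrow> g x = 0" "1 \<le> cmod (c n g - 1)"
      using Cp_character_far_from_one_near_support[OF assms(1,2) _ _ aU(2,3)] by blast
    then show "\<exists>g. g \<in> Cp_carrier X \<and> (\<forall>x\<in>topspace X - U n. g x = 0) \<and> 1 \<le> cmod (c n g - 1)"
      by blast
  qed
  from choice[OF this] obtain f :: "nat \<Rightarrow> 'a \<Rightarrow> int" where
    f: "\<forall>n. f n \<in> Cp_carrier X \<and> (\<forall>x\<in>topspace X - U n. f n x = 0) \<and> 1 \<le> cmod (c n (f n) - 1)"
    by blast
  \<comment> \<open>Disjointness of the \<open>U n\<close> makes \<open>f n\<close> tend to zero pointwise.\<close>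
  have null: "\<forall>x\<in>topspace X. finite {n. f n x \<noteq> 0}"
  proof
    fix x assume "x \<in> topspace X"
    then have "{n. f n x \<noteq> 0} \<subseteq> {n. x \<in> U n}" using f by blast
    moreover have "finite {n. x \<in> U n}"
    proof (cases "\<exists>n0. x \<in> U n0")
      case True
      then obtain n0 where "x \<in> U n0" by blast
      then have "{n. x \<in> U n} \<subseteq> {n0}" using disj by (auto simp: disjoint_family_on_def)
      then show ?thesis using finite_subset by blast
    qed simp
    ultimately show "finite {n. f n x \<noteq> 0}" using finite_subset by blast
  qed
  show ?thesis by (rule exI[of _ c], rule exI[of _ f]) (use c f null in blast)
qed

lemma compactin_Cp_dual_common_support:
  assumes "t1_space X" "zero_dimensional X" and K: "compactin (Cp_dual X) K"
  shows "\<exists>F. finite F \<and> F \<subseteq> topspace X \<and> (\<forall>c\<in>K. supported_on X c F)"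
proof -
  have KC: "K \<subseteq> Cp_characters X" using compactin_subset_topspace[OF K] by simp
  note S = char_support[OF assms(1,2)]
  define D where "D = (\<Union>c\<in>K. char_support X c)"
  have "D \<subseteq> topspace X" using S(2) KC by (auto simp: D_def)
  moreover have "supported_on X c D" if "c \<in> K" for c
  proof (rule supported_on_mono)
    show "supported_on X c (char_support X c)" using that KC S(3) by blast
    show "char_support X c \<subseteq> D" using that by (auto simp: D_def)
  qed
  moreover have "finite D"
  proof (rule ccontr)
    assume "infinite D"
    then obtain c :: "nat \<Rightarrow> ('a \<Rightarrow> int) \<Rightarrow> complex" and f :: "nat \<Rightarrow> 'a \<Rightarrow> int"
      where cf: "\<forall>n. c n \<in> K \<and> f n \<in> Cp_carrier X \<and> 1 \<le> cmod (c n (f n) - 1)"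
      and null: "\<forall>x\<in>topspace X. finite {n. f n x \<noteq> 0}"
      using Cp_characters_far_from_one_on_null_sequence[OF assms(1,2) KC] unfolding D_def by blast
    have "\<exists>N. \<forall>n\<ge>N. \<forall>c\<in>K. cmod (c (f n) - 1) < 1"
      by (rule compactin_Cp_dual_uniform_on_null_sequence[OF assms]) (use cf null in auto)
    then obtain N where "\<forall>c\<in>K. cmod (c (f N) - 1) < 1" by blast
    moreover have "c N \<in> K" "1 \<le> cmod (c N (f N) - 1)" using cf by auto
    ultimately show False by fastforce
  qed
  ultimately show ?thesis by blast
qed

definition point_char :: "'a topology \<Rightarrow> 'a \<Rightarrow> real \<Rightarrow> ('a \<Rightarrow> int) \<Rightarrow> complex" where
  "point_char X x s = restrict (\<lambda>g. cis (s * of_int (g x))) (Cp_carrier X)"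

lemma point_char_in_Cp_characters:
  assumes x: "x \<in> topspace X"
  shows "point_char X x s \<in> Cp_characters X"
proof -
  have "continuous_map (discrete_topology UNIV) (subtopology euclidean circle) (\<lambda>k::int. cis (s * of_int k))"
    by (simp add: circle_def)
  then have "continuous_map (Cp_top X) (subtopology euclidean circle) ((\<lambda>k. cis (s * of_int k)) \<circ> (\<lambda>g. g x))"
    using continuous_map_compose continuous_map_Cp_point_evaluation[OF x] by blast
  then have "continuous_map (Cp_top X) (subtopology euclidean circle) (point_char X x s)"
    by (rule continuous_map_eq) (simp add: point_char_def)
  then show ?thesis
    using x by (simp add: characters_def point_char_def cis_mult distrib_left)
qed

lemma Cp_eval_point_char:
  assumes "x \<in> topspace X" "g \<in> Cp_carrier X"
  shows "Cp_eval X g (point_char X x s) = cis (s * of_int (g x))"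
proof -
  have "Cp_eval X g (point_char X x s) = point_char X x s g"
    using point_char_in_Cp_characters[OF assms(1)] by (simp add: evaluation_def)
  then show ?thesis using assms(2) by (simp add: point_char_def)
qed

lemma continuous_map_point_char_line:
  assumes x: "x \<in> topspace X"
  shows "continuous_map euclideanreal (Cp_dual X) (\<lambda>t. point_char X x (t * a))"
proof (rule continuous_map_into_dual_top)
  show "point_char X x (t * a) \<in> Cp_characters X" for t using point_char_in_Cp_characters[OF x] .
  fix K U assume K: "compactin (Cp_top X) K" and U: "open (U::complex set)"
  have KC: "K \<subseteq> Cp_carrier X" using compactin_subset_topspace[OF K] by simp
  let ?V = "(\<lambda>g. g x) ` K"
  have eq: "{t \<in> topspace euclideanreal. point_char X x (t * a) ` K \<subseteq> U} =
        (\<Inter>k\<in>?V. (\<lambda>t. cis (t * a * of_int k)) -` U)"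
    using KC by (auto simp: point_char_def subset_iff)
  have "open ((\<lambda>t. cis (t * a * of_int k)) -` U)" for k
    by (rule continuous_open_vimage[OF U]) (unfold cis_conv_exp, intro continuous_intros)
  then have "open (\<Inter>k\<in>?V. (\<lambda>t. cis (t * a * of_int k)) -` U)"
    by (intro open_INT finite_point_values_compactin_Cp[OF K x]) blast
  then show "openin euclideanreal {t \<in> topspace euclideanreal. point_char X x (t * a) ` K \<subseteq> U}"
    unfolding eq by simp
qed

lemma closed_cis_image: "closed (cis ` {a..b})"
  by (intro compact_imp_closed compact_continuous_image continuous_intros) simp

lemma cis_neq_cis:
  assumes "0 < a - b" "a - b < 2 * pi" shows "cis a \<noteq> cis b"
proof
  assume "cis a = cis b"
  then have "\<exists>n::int. a = b + 2 * pi * n"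
    by (simp add: complex_eq_iff sin_cos_eq_iff[symmetric])
  then obtain n :: int where "a = b + 2 * pi * n" ..
  then have "0 < 2 * pi * n" "2 * pi * n < 2 * pi" using assms by auto
  then have "0 < n" "n < 1" by (auto simp: zero_less_mult_iff)
  then show False by simp
qed

lemma cis_arc_avoids_if:
  fixes M :: nat and j :: int
  assumes e: "e = 1 / (real M + 1)" and j: "0 \<le> j" "j \<le> int M" and t: "t \<in> {0..1}"
  shows "cis (t * (e * j)) \<notin> cis ` {e * M + e / 2 .. 2 * pi - e / 2}"
proof
  have e0: "0 < e" using e by simp
  have "2 * pi > 2" using pi_gt3 by simp
  have "0 \<le> e * j" "e * j \<le> e * M" using e0 j by (auto intro: mult_left_mono)
  then have arc: "0 \<le> t * (e * j)" "t * (e * j) \<le> e * M"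
    using t mult_left_le_one_le[of "e * j" t] by auto
  assume "cis (t * (e * j)) \<in> cis ` {e * M + e / 2 .. 2 * pi - e / 2}"
  then obtain b where b: "e * M + e / 2 \<le> b" "b \<le> 2 * pi - e / 2" "cis b = cis (t * (e * j))"
    by auto
  from arc b(1,2) e0 \<open>2 * pi > 2\<close> have "0 < b - t * (e * j)" "b - t * (e * j) < 2 * pi"
    by linarith+
  then show False using cis_neq_cis b(3) by metis
qed

lemma cis_arc_hits_if:
  fixes M :: nat and j :: int
  assumes e: "e = 1 / (real M + 1)" and j: "\<not> (0 \<le> j \<and> j \<le> int M)"
  shows "\<exists>t\<in>{0..1}. cis (t * (e * j)) \<in> cis ` {e * M + e / 2 .. 2 * pi - e / 2}"
proof -
  have e0: "0 < e" "e \<le> 1" and eM: "e * M + e = 1" unfolding e by (auto simp: field_simps)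
  have "2 * pi > 2" using pi_gt3 by simp
  consider "real_of_int j \<ge> real M + 1" | "- real_of_int j \<ge> 1" using j by linarith
  then show ?thesis
  proof cases
    case 1
    \<comment> \<open>The arc passes through the left end of the forbidden arc.\<close>
    define t where "t = (e * M + e / 2) / (e * j)"
    have "e * (real M + 1) \<le> e * j" using 1 e0 by (intro mult_left_mono) auto
    then have "e * M + e / 2 \<le> e * j" using e0 by (simp add: algebra_simps)
    then have t: "t \<in> {0..1}" "t * (e * j) = e * M + e / 2" using e0 1 by (auto simp: t_def)
    have "e * M + e / 2 \<in> {e * M + e / 2 .. 2 * pi - e / 2}" using e0 eM \<open>2 * pi > 2\<close> by auto
    then have "cis (t * (e * j)) \<in> cis ` {e * M + e / 2 .. 2 * pi - e / 2}"
      unfolding t(2) by (rule imageI)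
    then show ?thesis using t(1) by blast
  next
    case 2
    \<comment> \<open>The arc runs backwards into the right end of the forbidden arc.\<close>
    define t where "t = 1 / (2 * (- real_of_int j))"
    have t: "t \<in> {0..1}" "t * (e * j) = - e / 2" using 2 by (auto simp: t_def field_simps)
    have cis_eq: "cis (- e / 2) = cis (2 * pi - e / 2)"
      by (simp add: cis.ctr complex_eq_iff sin_diff cos_diff)
    have "2 * pi - e / 2 \<in> {e * M + e / 2 .. 2 * pi - e / 2}" using e0 eM \<open>2 * pi > 2\<close> by auto
    then have "cis (t * (e * j)) \<in> cis ` {e * M + e / 2 .. 2 * pi - e / 2}"
      unfolding t(2) cis_eq by (rule imageI)
    then show ?thesis using t(1) by blast
  qed
qed

lemma cis_arc_avoids_iff:
  fixes M :: nat and j :: int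
  assumes "e = 1 / (real M + 1)"
  shows "(\<forall>t\<in>{0..1}. cis (t * (e * j)) \<notin> cis ` {e * M + e / 2 .. 2 * pi - e / 2})
           \<longleftrightarrow> 0 \<le> j \<and> j \<le> int M"
  using cis_arc_avoids_if[OF assms] cis_arc_hits_if[OF assms] by blast

lemma cis_endpoint_avoids_iff:
  fixes M :: nat and j :: int
  assumes e: "e = 1 / (real M + 1)" and j: "0 \<le> j" "j \<le> int M"
  shows "cis (e * j) \<notin> cis ` {- e / 2 .. e * M - e / 2} \<longleftrightarrow> j = int M"
proof -
  have e0: "0 < e" using e by simp
  have eM: "e * M + e = 1" using e by (simp add: field_simps)
  have "2 * pi > 2" using pi_gt3 by simp
  show ?thesis
  proof
    assume "cis (e * j) \<notin> cis ` {- e / 2 .. e * M - e / 2}"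
    moreover have "e * j \<in> {- e / 2 .. e * M - e / 2}" if "j < int M"
    proof -
      have "e * j \<le> e * (real M - 1)" using that e0 by (intro mult_left_mono) auto
      moreover have "0 \<le> e * j" using j(1) e0 by simp
      ultimately show ?thesis using e0 by (auto simp: algebra_simps)
    qed
    ultimately show "j = int M" using j by fastforce
  next
    assume "j = int M"
    show "cis (e * j) \<notin> cis ` {- e / 2 .. e * M - e / 2}"
    proof
      assume "cis (e * j) \<in> cis ` {- e / 2 .. e * M - e / 2}"
      then obtain b where b: "b \<in> {- e / 2 .. e * M - e / 2}" "cis b = cis (e * j)" by auto
      have "0 < e * j - b" "e * j - b < 2 * pi" using b(1) e0 eM \<open>j = int M\<close> \<open>2 * pi > 2\<close> by auto
      then show False using cis_neq_cis b(2) by metis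
    qed
  qed
qed

section \<open>The evaluation map\<close>

lemma Cp_bidual_point_value_open:
  assumes x: "x \<in> topspace X"
  shows "\<exists>W. openin (Cp_bidual X) W \<and> (\<forall>g\<in>Cp_carrier X. Cp_eval X g \<in> W \<longleftrightarrow> g x = m)"
proof -
  define M where "M = nat \<bar>m\<bar>"
  define e where "e = 1 / (real M + 1)"
  define \<theta> where "\<theta> = (if m \<ge> 0 then e else - e)"
  define K1 where "K1 = (\<lambda>t. point_char X x (t * \<theta>)) ` {0..1}"
  define K2 where "K2 = {point_char X x \<theta>}"
  define B1 where "B1 = cis ` {e * M + e / 2 .. 2 * pi - e / 2}"
  define B2 where "B2 = cis ` {- e / 2 .. e * M - e / 2}"
  \<comment> \<open>At \<open>Cp_eval X g\<close>, \<open>K1\<close> becomes the arc from \<open>1\<close> to \<open>cis (\<theta> * g x)\<close>: keeping it off \<open>B1\<close>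
    confines \<open>\<bar>g x\<bar>\<close> (with the sign of \<open>m\<close>) to \<open>{0..M}\<close>, and keeping its endpoint off \<open>B2\<close> forces \<open>M\<close>.\<close>
  define W where "W = {c \<in> topspace (Cp_bidual X). c ` K1 \<subseteq> - B1} \<inter>
                      {c \<in> topspace (Cp_bidual X). c ` K2 \<subseteq> - B2}"
  have "compactin (Cp_dual X) K1"
    unfolding K1_def by (rule image_compactin[OF _ continuous_map_point_char_line[OF x]]) simp
  moreover have "compactin (Cp_dual X) K2"
    unfolding K2_def using point_char_in_Cp_characters[OF x] by simp
  ultimately have "openin (Cp_bidual X) W"
    unfolding W_def B1_def B2_def topspace_dual_top
    by (intro openin_Int openin_dual_top_subbasic open_Compl closed_cis_image)
  moreover have "Cp_eval X g \<in> W \<longleftrightarrow> g x = m" if g: "g \<in> Cp_carrier X" for g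
  proof -
    define j where "j = (if m \<ge> 0 then g x else - g x)"
    note eval = Cp_eval_point_char[OF x g]
    have thj: "\<theta> * of_int (g x) = e * of_int j" by (simp add: \<theta>_def j_def)
    have "Cp_eval X g ` K1 = (\<lambda>t. cis (t * (e * j))) ` {0..1}"
      unfolding K1_def image_image eval by (simp add: mult.assoc thj)
    moreover have "Cp_eval X g ` K2 = {cis (e * j)}"
      unfolding K2_def using eval[of \<theta>] thj by simp
    moreover have "Cp_eval X g \<in> W \<longleftrightarrow> Cp_eval X g ` K1 \<subseteq> - B1 \<and> Cp_eval X g ` K2 \<subseteq> - B2"
      using Cp_eval_in_bidual[OF g] by (simp add: W_def)
    ultimately have "Cp_eval X g \<in> W \<longleftrightarrow>
        (\<forall>t\<in>{0..1}. cis (t * (e * j)) \<notin> B1) \<and> cis (e * j) \<notin> B2"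
      by auto
    also have "\<dots> \<longleftrightarrow> j = int M"
      using cis_arc_avoids_iff[OF e_def, of j] cis_endpoint_avoids_iff[OF e_def, of j]
      unfolding B1_def B2_def by auto
    also have "\<dots> \<longleftrightarrow> g x = m" by (auto simp: j_def M_def)
    finally show ?thesis .
  qed
  ultimately show ?thesis by blast
qed

lemma inj_on_Cp_eval: "inj_on (Cp_eval X) (Cp_carrier X)"
proof (rule inj_onI)
  fix f g assume f: "f \<in> Cp_carrier X" and g: "g \<in> Cp_carrier X" and eq: "Cp_eval X f = Cp_eval X g"
  show "f = g"
  proof (rule Cp_carrier_eqI[OF f g])
    fix x assume "x \<in> topspace X"
    then have "\<exists>W. openin (Cp_bidual X) W \<and> (\<forall>h\<in>Cp_carrier X. Cp_eval X h \<in> W \<longleftrightarrow> h x = f x)"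
      by (rule Cp_bidual_point_value_open)
    then obtain W where W: "\<forall>h\<in>Cp_carrier X. Cp_eval X h \<in> W \<longleftrightarrow> h x = f x" by blast
    have "Cp_eval X g \<in> W" using W f eq by auto
    then show "f x = g x" using W g by auto
  qed
qed

lemma continuous_map_Cp_eval:
  assumes "t1_space X" "zero_dimensional X"
  shows "continuous_map (Cp_top X) (Cp_bidual X) (Cp_eval X)"
proof (rule continuous_map_into_dual_top)
  show "Cp_eval X g \<in> characters (Cp_dual X) (dual_add (Cp_top X))" if "g \<in> topspace (Cp_top X)" for g
    using Cp_eval_in_bidual that by simp
  fix K U assume K: "compactin (Cp_dual X) K" and U: "open (U :: complex set)"
  have KC: "K \<subseteq> Cp_characters X" using compactin_subset_topspace[OF K] by simp
  obtain F where F: "finite F" "F \<subseteq> topspace X" "\<forall>c\<in>K. supported_on X c F"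
    using compactin_Cp_dual_common_support[OF assms K] by blast
  show "openin (Cp_top X) {g \<in> topspace (Cp_top X). Cp_eval X g ` K \<subseteq> U}"
    unfolding openin_Cp_top
  proof (intro conjI ballI)
    fix g0 assume g0: "g0 \<in> {g \<in> topspace (Cp_top X). Cp_eval X g ` K \<subseteq> U}"
    have "Cp_eval X g ` K \<subseteq> U" if g: "g \<in> Cp_carrier X" "\<forall>x\<in>F. g x = g0 x" for g
    proof
      fix y assume "y \<in> Cp_eval X g ` K"
      then obtain c where c: "c \<in> K" "y = Cp_eval X g c" by blast
      have "c g = c g0" by (rule supported_on_agree[of c X F]) (use c KC F g g0 in auto)
      then have "y = Cp_eval X g0 c" using c KC by (auto simp: evaluation_def)
      then show "y \<in> U" using g0 c(1) by blast
    qed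
    then show "\<exists>F. finite F \<and> F \<subseteq> topspace X \<and>
        (\<forall>g\<in>Cp_carrier X. (\<forall>x\<in>F. g x = g0 x) \<longrightarrow> g \<in> {g \<in> topspace (Cp_top X). Cp_eval X g ` K \<subseteq> U})"
      using F(1,2) by (intro exI[of _ F]) auto
  qed auto
qed

lemma open_map_Cp_eval:
  "open_map (Cp_top X) (subtopology (Cp_bidual X) (Cp_eval X ` Cp_carrier X)) (Cp_eval X)"
  unfolding open_map_def
proof (intro allI impI)
  fix U assume U: "openin (Cp_top X) U"
  show "openin (subtopology (Cp_bidual X) (Cp_eval X ` Cp_carrier X)) (Cp_eval X ` U)"
  proof (subst openin_subopen, intro ballI)
    fix y assume "y \<in> Cp_eval X ` U"
    then obtain f0 where f0: "f0 \<in> U" "y = Cp_eval X f0" by blast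
    have f0C: "f0 \<in> Cp_carrier X" using f0(1) openin_subset[OF U] by auto
    obtain F where F: "finite F" "F \<subseteq> topspace X" "\<forall>g\<in>Cp_carrier X. (\<forall>x\<in>F. g x = f0 x) \<longrightarrow> g \<in> U"
      using U f0(1) unfolding openin_Cp_top by blast
    have "\<forall>x\<in>F. \<exists>W. openin (Cp_bidual X) W \<and> (\<forall>g\<in>Cp_carrier X. Cp_eval X g \<in> W \<longleftrightarrow> g x = f0 x)"
    proof
      fix x assume "x \<in> F"
      with F(2) show "\<exists>W. openin (Cp_bidual X) W \<and> (\<forall>g\<in>Cp_carrier X. Cp_eval X g \<in> W \<longleftrightarrow> g x = f0 x)"
        by (intro Cp_bidual_point_value_open) blast
    qed
    from bchoice[OF this] obtain W where W: "\<forall>x\<in>F. openin (Cp_bidual X) (W x) \<and>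
        (\<forall>g\<in>Cp_carrier X. Cp_eval X g \<in> W x \<longleftrightarrow> g x = f0 x)"
      by blast
    define T where "T = Cp_eval X ` Cp_carrier X \<inter> ((\<Inter>x\<in>F. W x) \<inter> topspace (Cp_bidual X))"
    have "openin (subtopology (Cp_bidual X) (Cp_eval X ` Cp_carrier X)) T"
      unfolding T_def using F(1) W by (intro openin_subtopology_Int2 openin_INT) auto
    moreover have "y \<in> T"
      using f0 f0C W Cp_eval_in_bidual by (auto simp: T_def)
    moreover have "T \<subseteq> Cp_eval X ` U"
      using F(3) W by (auto simp: T_def)
    ultimately show "\<exists>T. openin (subtopology (Cp_bidual X) (Cp_eval X ` Cp_carrier X)) T \<and>
        y \<in> T \<and> T \<subseteq> Cp_eval X ` U"
      by blast
  qed
qed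

lemma homeomorphic_map_Cp_eval:
  assumes "t1_space X" "zero_dimensional X"
  shows "homeomorphic_map (Cp_top X) (subtopology (Cp_bidual X) (Cp_eval X ` Cp_carrier X)) (Cp_eval X)"
  by (rule bijective_open_imp_homeomorphic_map)
     (use continuous_map_Cp_eval[OF assms] open_map_Cp_eval inj_on_Cp_eval Cp_eval_in_bidual in
       \<open>auto simp: continuous_map_in_subtopology\<close>)

theorem proposition6p5:
  fixes X :: "'a topology"
  assumes "tikhonov_space X"
    and "zero_dimensional X"
    and "N_compact X"
    and "\<not> measurable_cardinality (topspace X)"
  shows "top_iso_onto_image (Cp_top X) (Cp_add X)
           (dual_top (dual_top (Cp_top X) (Cp_add X)) (dual_add (Cp_top X)))
           (dual_add (dual_top (Cp_top X) (Cp_add X)))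
           (evaluation (Cp_top X) (Cp_add X))"
proof -
  have "t1_space X" using assms(1) by (simp add: tikhonov_space_def)
  then show ?thesis
    unfolding top_iso_onto_image_def
    using homeomorphic_map_Cp_eval[OF _ assms(2)] Cp_eval_in_bidual
      evaluation_add[of _ "Cp_top X" _ "Cp_add X"] by auto
qed

end
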